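(* Suppose $\alpha=r\beta+s$ with $r,s\in\mathbb{Q}^d$ and $\beta\in\mathbb{R}$, and let $\mathcal{D}=[0,1)^d$. Then \[\sup_{T_1,\ldots,T_d\geq 1} G(\alpha,\mathcal{D}_T)<\infty .\]
   Context: For a bounded set $\mathcal{D}\subset\mathbb{R}^d$ and $\alpha\in\mathbb{R}^d$, let $S(\alpha,\mathcal{D})=\{m\cdot\alpha \bmod 1 \mid m\in\mathbb{Z}^d\cap\mathcal{D}\}\subset\mathbb{R}/\mathbb{Z}$, and let $G(\alpha,\mathcal{D})$ be the number of distinct lengths of the gaps between consecutive elements of $S(\alpha,\mathcal{D})$ on the circle $\mathbb{R}/\mathbb{Z}$. For $T=\operatorname{diag}(T_1,\ldots,T_d)$ with $T_i>0$, $\mathcal{D}_T=\{xT\mid x\in\mathcal{D}\}$, so here $\mathcal{D}_T=[0,T_1)\times\cdots\times[0,T_d)$. *)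

theory Defs
  imports "HOL-Analysis.Analysis"
begin

definition S_set :: "real ^ 'd \<Rightarrow> (real ^ 'd) set \<Rightarrow> real set" where
  "S_set \<alpha> D = {frac (m \<bullet> \<alpha>) | m. m \<in> D \<and> (\<forall>i. m $ i \<in> \<int>)}"

text \<open>Gap lengths of a finite set X of representatives in [0,1) of points on the circle R/Z:
  the gap after x is the distance to the next point of X counterclockwise (wrapping around).\<close>
definition circle_gaps :: "real set \<Rightarrow> real set" where
  "circle_gaps X = {(if (\<exists>y\<in>X. x < y) then Min {y\<in>X. x < y} else Min X + 1) - x | x. x \<in> X}"

definition G_num :: "real ^ 'd \<Rightarrow> (real ^ 'd) set \<Rightarrow> nat" where
  "G_num \<alpha> D = card (circle_gaps (S_set \<alpha> D))"

definition scale_set :: "real ^ 'd \<Rightarrow> (real ^ 'd) set \<Rightarrow> (real ^ 'd) set" where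
  "scale_set T D = {(\<chi> i. x $ i * T $ i) | x. x \<in> D}"

definition unit_cube :: "(real ^ 'd) set" where
  "unit_cube = {x. \<forall>i. 0 \<le> x $ i \<and> x $ i < 1}"

end

theory Submission
  imports Defs
begin

text \<open>
  Write \<open>\<alpha> = \<theta> a + b / Q\<close> with integer vectors \<open>a\<close>, \<open>b\<close>. If \<open>\<theta>\<close> is rational, all points
  lie in \<open>(1/L) \<int>\<close> for a fixed \<open>L\<close>, so there are at most \<open>L\<close> gap lengths. If \<open>\<theta>\<close> is irrational,
  pick \<open>i\<close> with \<open>a\<^sub>i \<noteq> 0\<close> and \<open>T\<^sub>i\<close> large, and translate the point set by \<open>\<tau> = Q \<alpha>\<^sub>i\<close>, the image of
  the lattice shift \<open>m \<mapsto> m + Q e\<^sub>i\<close>. Wherever the translate stays inside the point set, gap lengths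
  are carried along, while the height \<open>m \<bullet> a\<close> drops by \<open>Q \<bar>a\<^sub>i\<bar>\<close> (irrationality of \<open>\<theta>\<close> forces
  \<open>m \<bullet> a\<close> to be a function of the point \<open>frac (m \<bullet> \<alpha>)\<close>). Hence every gap length occurs at a point
  where the translation leaves the point set. Such points come from lattice points near the faces
  of the box: a lattice point far from the faces in a direction \<open>j\<close> with \<open>a\<^sub>j \<noteq> 0\<close> can first be
  moved along \<open>Q (a\<^sub>j e\<^sub>i - a\<^sub>i e\<^sub>j)\<close>, which changes \<open>m \<bullet> \<alpha>\<close> by an integer, to make room for the
  shift. Coordinatewise, the remaining lattice points produce at most \<open>Q (2 A + 1)\<close> values of
  \<open>frac (m\<^sub>j \<alpha>\<^sub>j)\<close>, where \<open>A\<close> bounds all \<open>\<bar>a\<^sub>j\<bar>\<close>; this bounds their number of images by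
  \<open>(Q (2 A + 1))\<^sup>d\<close>.
\<close>

section \<open>Gaps of finite subsets of the circle\<close>

definition int_translates :: "real set \<Rightarrow> real set" where
  "int_translates X = {x + of_int k | x k. x \<in> X}"

definition next_gap :: "real set \<Rightarrow> real \<Rightarrow> real" where
  "next_gap X x = (if \<exists>y\<in>X. x < y then Min {y\<in>X. x < y} else Min X + 1) - x"

definition shift_defects :: "real set \<Rightarrow> real \<Rightarrow> real set" where
  "shift_defects X \<tau> = {x\<in>X. x + \<tau> \<notin> int_translates X}"

definition gap_end_defects :: "real set \<Rightarrow> real \<Rightarrow> real set" where
  "gap_end_defects X \<tau> = {x\<in>X. x + next_gap X x - \<tau> \<notin> int_translates X}"

definition gap_interior_defects :: "real set \<Rightarrow> real \<Rightarrow> real set" where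
  "gap_interior_defects X \<tau> = {x\<in>X. \<exists>w\<in>int_translates X.
     x - \<tau> < w \<and> w < x + next_gap X x - \<tau> \<and> w + \<tau> \<notin> int_translates X}"

lemma circle_gaps_eq_image: "circle_gaps X = next_gap X ` X"
  unfolding circle_gaps_def next_gap_def by (simp add: Setcompr_eq_image)

lemma int_translatesI: "x \<in> X \<Longrightarrow> x + of_int k \<in> int_translates X"
  unfolding int_translates_def by blast

lemma int_translates_add_Ints:
  assumes "z \<in> int_translates X" "k \<in> \<int>" shows "z + k \<in> int_translates X"
proof -
  obtain x n where "z = x + of_int n" "x \<in> X" using assms(1) unfolding int_translates_def by blast
  moreover obtain n' where "k = of_int n'" using assms(2) by (elim Ints_cases)
  ultimately show ?thesis using int_translatesI[of x X "n + n'"] by (simp add: add.assoc)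
qed

lemma mem_int_translates_iff:
  assumes "X \<subseteq> {0..<1}" shows "z \<in> int_translates X \<longleftrightarrow> frac z \<in> X"
proof
  assume "z \<in> int_translates X"
  then obtain x k where "z = x + of_int k" "x \<in> X" unfolding int_translates_def by blast
  with assms show "frac z \<in> X" by auto
next
  assume "frac z \<in> X"
  then show "z \<in> int_translates X"
    using int_translatesI[of "frac z" X "\<lfloor>z\<rfloor>"] by (simp add: frac_def)
qed

context
  fixes X :: "real set"
  assumes finite_X: "finite X" and X_unit: "X \<subseteq> {0..<1}"
begin

lemma Min_greater:
  assumes "y \<in> X" "x < y"
  shows "Min {y\<in>X. x < y} \<in> X" "x < Min {y\<in>X. x < y}" "Min {y\<in>X. x < y} \<le> y"
proof -
  have "Min {y\<in>X. x < y} \<in> {y\<in>X. x < y}" using finite_X assms by (intro Min_in) auto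
  then show "Min {y\<in>X. x < y} \<in> X" "x < Min {y\<in>X. x < y}" by auto
  show "Min {y\<in>X. x < y} \<le> y" using finite_X assms by simp
qed

lemma next_gap_end_mem:
  assumes "x \<in> X" shows "x + next_gap X x \<in> int_translates X"
proof (cases "\<exists>y\<in>X. x < y")
  case True
  then show ?thesis using Min_greater int_translatesI[of _ X 0] by (auto simp: next_gap_def)
next
  case False
  have "Min X \<in> X" using finite_X assms by (intro Min_in) auto
  then show ?thesis using False int_translatesI[of "Min X" X 1] by (simp add: next_gap_def)
qed

lemma next_gap_minimal:
  assumes x: "x \<in> X" and w: "w \<in> int_translates X" "x < w"
  shows "x + next_gap X x \<le> w"
proof -
  obtain y k where wy: "w = y + of_int k" and y: "y \<in> X" using w(1) unfolding int_translates_def by blast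
  have unit: "0 \<le> x" "x < 1" "0 \<le> y" "y < 1" using X_unit x y by auto
  show ?thesis
  proof (cases "\<exists>y\<in>X. x < y")
    case True
    have "-1 < real_of_int k" using unit w(2) wy by linarith
    then have "k \<ge> 0" by simp
    then consider "k = 0" | "k \<ge> 1" by linarith
    then show ?thesis
    proof cases
      case 1 then show ?thesis using True Min_greater w(2) wy y by (auto simp: next_gap_def)
    next
      case 2
      then have "1 \<le> real_of_int k" by simp
      then have "1 \<le> w" using wy unit by linarith
      moreover have "Min {y\<in>X. x < y} < 1" using True Min_greater X_unit by (meson atLeastLessThan_iff subsetD)
      ultimately show ?thesis using True by (simp add: next_gap_def)
    qed
  next
    case False
    then have "y \<le> x" using y by auto
    then have "0 < real_of_int k" using w(2) wy by linarith
    then have "k \<ge> 1" by simp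
    moreover have "Min X \<le> y" using finite_X y by simp
    ultimately show ?thesis using False wy by (simp add: next_gap_def)
  qed
qed

lemma next_gap_pos:
  assumes "x \<in> X" shows "0 < next_gap X x"
proof (cases "\<exists>y\<in>X. x < y")
  case True
  then show ?thesis using Min_greater by (auto simp: next_gap_def)
next
  case False
  have "Min X \<in> X" using finite_X assms by (intro Min_in) auto
  then have "0 \<le> Min X" "x < 1" using assms X_unit by auto
  then show ?thesis using False by (simp add: next_gap_def)
qed

lemma next_gap_le_1: "x \<in> X \<Longrightarrow> next_gap X x \<le> 1"
  using next_gap_minimal[of x "x + 1"] int_translatesI[of x X 1] by simp

lemma int_translatesD: "z \<in> int_translates X \<Longrightarrow> frac z \<in> X"
  using X_unit by (simp add: mem_int_translates_iff)

lemma next_gap_frac_end_mem: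
  assumes "z \<in> int_translates X" shows "z + next_gap X (frac z) \<in> int_translates X"
proof -
  have "frac z + next_gap X (frac z) + of_int \<lfloor>z\<rfloor> \<in> int_translates X"
    using next_gap_end_mem[OF int_translatesD[OF assms]] by (simp add: int_translates_add_Ints)
  then show ?thesis by (simp add: frac_def)
qed

lemma next_gap_frac_minimal:
  assumes z: "z \<in> int_translates X" and w: "w \<in> int_translates X" "z < w"
  shows "z + next_gap X (frac z) \<le> w"
proof -
  have "w - of_int \<lfloor>z\<rfloor> \<in> int_translates X"
    using int_translates_add_Ints[OF w(1), of "- of_int \<lfloor>z\<rfloor>"] by simp
  moreover have "frac z < w - of_int \<lfloor>z\<rfloor>" using w(2) by (simp add: frac_def)
  ultimately have "frac z + next_gap X (frac z) \<le> w - of_int \<lfloor>z\<rfloor>"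
    using next_gap_minimal int_translatesD[OF z] by blast
  then show ?thesis by (simp add: frac_def)
qed

lemma next_gap_unique:
  assumes z: "z \<in> int_translates X" and h: "0 < h" "z + h \<in> int_translates X"
    and no_between: "\<And>w. w \<in> int_translates X \<Longrightarrow> z < w \<Longrightarrow> z + h \<le> w"
  shows "next_gap X (frac z) = h"
  using next_gap_frac_minimal[OF z h(2)] no_between[OF next_gap_frac_end_mem[OF z]]
    next_gap_pos[OF int_translatesD[OF z]] h(1)
  by linarith

lemma gap_intervals_disjoint:
  assumes "z\<^sub>1 \<in> int_translates X" "z\<^sub>1 < p" "p \<le> z\<^sub>1 + next_gap X (frac z\<^sub>1)"
    and "z\<^sub>2 \<in> int_translates X" "z\<^sub>2 < p" "p \<le> z\<^sub>2 + next_gap X (frac z\<^sub>2)"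
  shows "z\<^sub>1 = z\<^sub>2"
  using next_gap_frac_minimal[of z\<^sub>1 z\<^sub>2] next_gap_frac_minimal[of z\<^sub>2 z\<^sub>1] assms
  by (cases z\<^sub>1 z\<^sub>2 rule: linorder_cases) auto

lemma frac_eq_self: "x \<in> X \<Longrightarrow> frac x = x"
  using X_unit by auto

lemma frac_add_int_translates_iff: "frac y + \<sigma> \<in> int_translates X \<longleftrightarrow> y + \<sigma> \<in> int_translates X"
  using X_unit by (simp add: mem_int_translates_iff)

lemma next_gap_shift_invariant:
  assumes x: "x \<in> X" and ends: "x - \<tau> \<in> int_translates X" "x + next_gap X x - \<tau> \<in> int_translates X"
    and inside: "\<And>w. w \<in> int_translates X \<Longrightarrow> x - \<tau> < w \<Longrightarrow> w < x + next_gap X x - \<tau> \<Longrightarrow>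
      w + \<tau> \<in> int_translates X"
  shows "next_gap X (frac (x - \<tau>)) = next_gap X x"
proof (rule next_gap_unique[OF ends(1) next_gap_pos[OF x]])
  show "x - \<tau> + next_gap X x \<in> int_translates X" using ends(2) by (simp add: algebra_simps)
  fix w assume w: "w \<in> int_translates X" "x - \<tau> < w"
  show "x - \<tau> + next_gap X x \<le> w"
  proof (rule ccontr)
    assume "\<not> x - \<tau> + next_gap X x \<le> w"
    then have "w + \<tau> \<in> int_translates X" "x + next_gap X x > w + \<tau>" using inside w by auto
    then show False using next_gap_minimal[OF x, of "w + \<tau>"] w(2) by auto
  qed
qed

lemma card_gap_end_defects_le: "card (gap_end_defects X \<tau>) \<le> card (shift_defects X (- \<tau>))"
proof (rule card_inj_on_le)
  let ?e = "\<lambda>x. frac (x + next_gap X x)"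
  show "inj_on ?e (gap_end_defects X \<tau>)"
  proof (rule inj_onI)
    fix x\<^sub>1 x\<^sub>2 assume "x\<^sub>1 \<in> gap_end_defects X \<tau>" "x\<^sub>2 \<in> gap_end_defects X \<tau>" and eq: "?e x\<^sub>1 = ?e x\<^sub>2"
    then have x: "x\<^sub>1 \<in> X" "x\<^sub>2 \<in> X" by (simp_all add: gap_end_defects_def)
    obtain k where k: "x\<^sub>1 + next_gap X x\<^sub>1 = x\<^sub>2 + of_int k + next_gap X x\<^sub>2"
      using eq by (auto elim: frac_eqE)
    have "x\<^sub>1 = x\<^sub>2 + of_int k"
      using gap_intervals_disjoint[of x\<^sub>1 "x\<^sub>1 + next_gap X x\<^sub>1" "x\<^sub>2 + of_int k"] x k
        next_gap_pos[of x\<^sub>1] next_gap_pos[of x\<^sub>2] int_translatesI[of _ X]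
        int_translatesI[of x\<^sub>1 X 0] by (auto simp: frac_eq_self)
    then show "x\<^sub>1 = x\<^sub>2" using x frac_eq_self by (metis frac_add_of_int_right)
  qed
  show "?e ` gap_end_defects X \<tau> \<subseteq> shift_defects X (- \<tau>)"
    using next_gap_end_mem int_translatesD frac_add_int_translates_iff[of _ "- \<tau>"]
    by (auto simp: shift_defects_def gap_end_defects_def)
qed (simp add: shift_defects_def finite_X)

lemma card_gap_interior_defects_le:
  "card (gap_interior_defects X \<tau>) \<le> card (shift_defects X \<tau>)" (is "card ?D \<le> _")
proof -
  have "\<forall>x\<in>?D. \<exists>w. w \<in> int_translates X \<and> x - \<tau> < w \<and> w < x + next_gap X x - \<tau> \<and>
      w + \<tau> \<notin> int_translates X" by (auto simp: gap_interior_defects_def)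
  from bchoice[OF this] obtain wit where wit: "\<And>x. x \<in> ?D \<Longrightarrow> wit x \<in> int_translates X \<and>
      x - \<tau> < wit x \<and> wit x < x + next_gap X x - \<tau> \<and> wit x + \<tau> \<notin> int_translates X"
    by blast
  have "inj_on (\<lambda>x. frac (wit x)) ?D"
  proof (rule inj_onI)
    fix x\<^sub>1 x\<^sub>2 assume D: "x\<^sub>1 \<in> ?D" "x\<^sub>2 \<in> ?D" and eq: "frac (wit x\<^sub>1) = frac (wit x\<^sub>2)"
    then have x: "x\<^sub>1 \<in> X" "x\<^sub>2 \<in> X" by (simp_all add: gap_interior_defects_def)
    obtain k where k: "wit x\<^sub>1 = wit x\<^sub>2 + of_int k" using eq by (auto elim: frac_eqE)
    have "x\<^sub>1 = x\<^sub>2 + of_int k"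
      using gap_intervals_disjoint[of x\<^sub>1 "wit x\<^sub>1 + \<tau>" "x\<^sub>2 + of_int k"] wit[OF D(1)] wit[OF D(2)] x k
        int_translatesI[of _ X] int_translatesI[of x\<^sub>1 X 0] by (auto simp: frac_eq_self)
    then show "x\<^sub>1 = x\<^sub>2" using x frac_eq_self by (metis frac_add_of_int_right)
  qed
  moreover have "(\<lambda>x. frac (wit x)) ` ?D \<subseteq> shift_defects X \<tau>"
    unfolding shift_defects_def using wit int_translatesD frac_add_int_translates_iff by blast
  moreover have "finite (shift_defects X \<tau>)" by (simp add: shift_defects_def finite_X)
  ultimately show ?thesis by (rule card_inj_on_le)
qed

text \<open>
  A point of least \<open>\<mu>\<close> among those with a given gap cannot be moved by \<open>-\<tau>\<close> with its gap intact,
  so \<open>x - \<tau>\<close>, the end \<open>x + g - \<tau>\<close> of its translated gap, or a point inside that gap is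
  missing from the translated picture.
\<close>

lemma next_gaps_attained_at_defects:
  fixes \<mu> :: "real \<Rightarrow> 'a::linorder"
  assumes descent: "\<And>x. x \<in> X \<Longrightarrow> x - \<tau> \<in> int_translates X \<Longrightarrow> \<mu> (frac (x - \<tau>)) < \<mu> x"
  shows "next_gap X ` X \<subseteq>
    next_gap X ` (shift_defects X (- \<tau>) \<union> gap_end_defects X \<tau> \<union> gap_interior_defects X \<tau>)"
proof
  fix \<gamma> assume "\<gamma> \<in> next_gap X ` X"
  let ?M = "Min (\<mu> ` {x\<in>X. next_gap X x = \<gamma>})"
  have ne: "\<mu> ` {x\<in>X. next_gap X x = \<gamma>} \<noteq> {}" "finite (\<mu> ` {x\<in>X. next_gap X x = \<gamma>})"
    using \<open>\<gamma> \<in> next_gap X ` X\<close> finite_X by auto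
  have "?M \<in> \<mu> ` {x\<in>X. next_gap X x = \<gamma>}" by (rule Min_in[OF ne(2,1)])
  then obtain x where "?M = \<mu> x" "x \<in> {x\<in>X. next_gap X x = \<gamma>}" by (rule imageE)
  then have x: "x \<in> X" "next_gap X x = \<gamma>" "\<mu> x = ?M" by simp_all
  have least: "\<mu> x \<le> \<mu> y" if "y \<in> X" "next_gap X y = \<gamma>" for y
    unfolding x(3) using ne(2) that by (intro Min_le) auto
  have "x \<in> shift_defects X (- \<tau>) \<union> gap_end_defects X \<tau> \<union> gap_interior_defects X \<tau>"
  proof (rule ccontr)
    assume "x \<notin> shift_defects X (- \<tau>) \<union> gap_end_defects X \<tau> \<union> gap_interior_defects X \<tau>"
    then have ends: "x - \<tau> \<in> int_translates X" "x + next_gap X x - \<tau> \<in> int_translates X"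
      and inside: "\<And>w. w \<in> int_translates X \<Longrightarrow> x - \<tau> < w \<Longrightarrow> w < x + next_gap X x - \<tau> \<Longrightarrow>
        w + \<tau> \<in> int_translates X"
      using x(1) by (auto simp: shift_defects_def gap_end_defects_def gap_interior_defects_def)
    have "next_gap X (frac (x - \<tau>)) = \<gamma>"
      using next_gap_shift_invariant[OF x(1) ends inside] x(2) by simp
    then have "\<mu> x \<le> \<mu> (frac (x - \<tau>))" using least int_translatesD[OF ends(1)] by blast
    then show False using descent[OF x(1) ends(1)] by simp
  qed
  then show "\<gamma> \<in> next_gap X ` (shift_defects X (- \<tau>) \<union> gap_end_defects X \<tau> \<union> gap_interior_defects X \<tau>)"
    using x(2) by blast
qed

lemma card_next_gaps_le_shift_defects:
  fixes \<mu> :: "real \<Rightarrow> 'a::linorder"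
  assumes descent: "\<And>x. x \<in> X \<Longrightarrow> x - \<tau> \<in> int_translates X \<Longrightarrow> \<mu> (frac (x - \<tau>)) < \<mu> x"
  shows "card (next_gap X ` X) \<le> 2 * card (shift_defects X (- \<tau>)) + card (shift_defects X \<tau>)"
proof -
  let ?E = "shift_defects X (- \<tau>)" and ?F = "gap_end_defects X \<tau>" and ?I = "gap_interior_defects X \<tau>"
  have "?E \<subseteq> X" "?F \<subseteq> X" "?I \<subseteq> X"
    unfolding shift_defects_def gap_end_defects_def gap_interior_defects_def by blast+
  then have finite: "finite ?E" "finite ?F" "finite ?I" using finite_subset finite_X by blast+
  have "card (next_gap X ` X) \<le> card (next_gap X ` (?E \<union> ?F \<union> ?I))"
    using next_gaps_attained_at_defects[of \<tau> \<mu>, OF descent] finite by (intro card_mono) auto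
  also have "\<dots> \<le> card (?E \<union> ?F \<union> ?I)" by (rule card_image_le) (use finite in simp)
  also have "\<dots> \<le> card ?E + card ?F + card ?I"
    using card_Un_le[of ?E ?F] card_Un_le[of "?E \<union> ?F" ?I] by linarith
  also have "\<dots> \<le> 2 * card ?E + card (shift_defects X \<tau>)"
    using card_gap_end_defects_le[of \<tau>] card_gap_interior_defects_le[of \<tau>] by simp
  finally show ?thesis .
qed

lemma card_next_gaps_le_denominator:
  assumes L: "L > 0" "\<And>x. x \<in> X \<Longrightarrow> real L * x \<in> \<int>"
  shows "card (next_gap X ` X) \<le> L"
proof -
  have "next_gap X ` X \<subseteq> (\<lambda>k. of_int k / real L) ` {1..int L}"
  proof
    fix \<gamma> assume "\<gamma> \<in> next_gap X ` X"
    then obtain x where x: "x \<in> X" and \<gamma>: "\<gamma> = next_gap X x" by blast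
    define y where "y = x + \<gamma>"
    have "y \<in> int_translates X" unfolding y_def \<gamma> by (rule next_gap_end_mem[OF x])
    then have "real L * \<gamma> = real L * frac y + real L * of_int \<lfloor>y\<rfloor> - real L * x"
      unfolding y_def by (simp add: frac_def algebra_simps)
    also have "\<dots> \<in> \<int>"
      using L(2) x int_translatesD[OF \<open>y \<in> _\<close>] by (intro Ints_diff Ints_add) auto
    finally obtain k where k: "real L * \<gamma> = of_int k" by (elim Ints_cases)
    have "0 < real L * \<gamma>" "real L * \<gamma> \<le> real L"
      using next_gap_pos[OF x] next_gap_le_1[OF x] L(1) \<gamma> by simp_all
    then have "k \<in> {1..int L}" unfolding k by simp
    moreover have "\<gamma> = of_int k / real L" using k L(1) by (simp add: field_simps)
    ultimately show "\<gamma> \<in> (\<lambda>k. of_int k / real L) ` {1..int L}" by blast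
  qed
  then have "card (next_gap X ` X) \<le> card ((\<lambda>k. of_int k / real L) ` {1..int L})"
    by (intro card_mono) auto
  also have "\<dots> \<le> L" using card_image_le[of "{1..int L}"] by simp
  finally show ?thesis .
qed

end

section \<open>Lattice points in a box\<close>

definition lattice_box :: "real^'d \<Rightarrow> (real^'d) set" where
  "lattice_box T = {m. \<forall>i. m$i \<in> \<int> \<and> 0 \<le> m$i \<and> m$i < T$i}"

lemma scale_set_unit_cube:
  assumes "\<forall>i. 0 < T$i"
  shows "scale_set T unit_cube = {y. \<forall>i. 0 \<le> y$i \<and> y$i < T$i}"
proof (intro set_eqI iffI)
  fix y assume "y \<in> scale_set T unit_cube"
  then obtain x where y: "y = (\<chi> i. x$i * T$i)" and x: "\<forall>i. 0 \<le> x$i \<and> x$i < 1"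
    unfolding scale_set_def unit_cube_def by blast
  have "0 \<le> x$i * T$i \<and> x$i * T$i < 1 * T$i" for i
    using x assms by (simp add: mult_strict_right_mono less_imp_le)
  then show "y \<in> {y. \<forall>i. 0 \<le> y$i \<and> y$i < T$i}" unfolding y by simp
next
  fix y assume y: "y \<in> {y. \<forall>i. 0 \<le> y$i \<and> y$i < T$i}"
  have "(\<chi> i. y$i / T$i) \<in> unit_cube" using y assms by (auto simp: unit_cube_def divide_simps)
  moreover have "y = (\<chi> i. (\<chi> i. y$i / T$i) $ i * T$i)" using assms by (simp add: vec_eq_iff less_le)
  ultimately show "y \<in> scale_set T unit_cube" unfolding scale_set_def by blast
qed

lemma S_set_scaled_unit_cube:
  "\<forall>i. 0 < T$i \<Longrightarrow> S_set \<alpha> (scale_set T unit_cube) = (\<lambda>m. frac (m \<bullet> \<alpha>)) ` lattice_box T"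
  unfolding S_set_def scale_set_unit_cube lattice_box_def by auto

lemma lattice_box_add_axis_iff:
  assumes "m \<in> lattice_box T"
  shows "m + axis i u \<in> lattice_box T \<longleftrightarrow> u \<in> \<int> \<and> 0 \<le> m$i + u \<and> m$i + u < T$i"
proof -
  have "(m + axis i u)$k = m$k + (if k = i then u else 0)" for k by (simp add: axis_def)
  moreover have "m$i + u \<in> \<int> \<longleftrightarrow> u \<in> \<int>"
    using assms Ints_diff[of "m$i + u" "m$i"] by (auto simp: lattice_box_def)
  ultimately show ?thesis using assms unfolding lattice_box_def by force
qed

lemma Ints_interval_subset:
  fixes u w :: real
  shows "{t \<in> \<int>. u \<le> t \<and> t < u + w} \<subseteq> of_int ` {\<lceil>u\<rceil>..<\<lceil>u\<rceil> + \<lceil>w\<rceil>}"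
proof
  fix t assume "t \<in> {t \<in> \<int>. u \<le> t \<and> t < u + w}"
  then obtain k where k: "t = of_int k" "u \<le> of_int k" "of_int k < u + w" by (auto elim: Ints_cases)
  then have "real_of_int k < of_int \<lceil>u\<rceil> + of_int \<lceil>w\<rceil>" using le_of_int_ceiling[of u] le_of_int_ceiling[of w] by linarith
  then have "k < \<lceil>u\<rceil> + \<lceil>w\<rceil>" by (metis of_int_add of_int_less_iff)
  then show "t \<in> of_int ` {\<lceil>u\<rceil>..<\<lceil>u\<rceil> + \<lceil>w\<rceil>}" using k by (auto simp: ceiling_le_iff)
qed

lemma finite_Ints_interval: "finite {t \<in> \<int>. u \<le> t \<and> t < (v::real)}"
  using finite_subset[OF Ints_interval_subset[of u "v - u"]] by simp

lemma card_Ints_interval_le: "card {t \<in> \<int>. u \<le> t \<and> t < u + w} \<le> nat \<lceil>w::real\<rceil>"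
proof -
  have "card {t \<in> \<int>. u \<le> t \<and> t < u + w} \<le> card (of_int ` {\<lceil>u\<rceil>..<\<lceil>u\<rceil> + \<lceil>w\<rceil>} :: real set)"
    by (rule card_mono[OF _ Ints_interval_subset]) simp
  also have "\<dots> \<le> nat \<lceil>w\<rceil>" using card_image_le[of "{\<lceil>u\<rceil>..<\<lceil>u\<rceil> + \<lceil>w\<rceil>}" "of_int"] by simp
  finally show ?thesis .
qed

lemma finite_vectors_with_components:
  assumes "\<And>i. finite (V i)" shows "finite {v :: 'a^'d. \<forall>i. v$i \<in> V i}"
proof -
  have "{v :: 'a^'d. \<forall>i. v$i \<in> V i} \<subseteq> vec_lambda ` Pi\<^sub>E UNIV V"
  proof
    fix v :: "'a^'d" assume "v \<in> {v. \<forall>i. v$i \<in> V i}"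
    then have "vec_nth v \<in> Pi\<^sub>E UNIV V" by (simp add: PiE_UNIV_domain)
    then show "v \<in> vec_lambda ` Pi\<^sub>E UNIV V" by (metis image_eqI vec_nth_inverse)
  qed
  then show ?thesis by (rule finite_subset) (intro finite_imageI finite_PiE assms, simp)
qed

lemma finite_lattice_box: "finite (lattice_box (T :: real^'d))"
proof -
  have "lattice_box T \<subseteq> {v. \<forall>i. v$i \<in> {t \<in> \<int>. 0 \<le> t \<and> t < T$i}}" unfolding lattice_box_def by auto
  moreover have "finite {v :: real^'d. \<forall>i. v$i \<in> {t \<in> \<int>. 0 \<le> t \<and> t < T$i}}"
    by (rule finite_vectors_with_components) (rule finite_Ints_interval)
  ultimately show ?thesis by (rule finite_subset)
qed

lemma frac_Ints_divide:
  assumes "k \<in> \<int>" "Q > (0::nat)"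
  shows "frac (k / real Q) \<in> (\<lambda>i. of_int i / real Q) ` {0..<int Q}"
proof -
  have "real Q * frac (k / real Q) = k - real Q * of_int \<lfloor>k / real Q\<rfloor>"
    using assms(2) by (simp add: frac_def algebra_simps)
  also have "\<dots> \<in> \<int>" using assms(1) by simp
  finally obtain i where i: "real Q * frac (k / real Q) = of_int i" by (elim Ints_cases)
  have "0 \<le> real_of_int i" "real_of_int i < real Q"
    unfolding i[symmetric] using assms(2) frac_lt_1[of "k / real Q"] by simp_all
  then have "i \<in> {0..<int Q}" by simp
  moreover have "frac (k / real Q) = real Q * frac (k / real Q) / real Q" using assms(2) by simp
  then have "frac (k / real Q) = of_int i / real Q" unfolding i .
  ultimately show ?thesis by blast
qed

lemma frac_image_subset: "(\<lambda>x. frac (f x)) ` S \<subseteq> {0..<1}"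
  by (auto simp: frac_lt_1)

lemma Ints_inner: "(\<And>i. m$i \<in> \<int>) \<Longrightarrow> (\<And>i. v$i \<in> \<int>) \<Longrightarrow> m \<bullet> v \<in> \<int>" for m v :: "real^'d"
  unfolding inner_vec_def by (intro Ints_sum Ints_mult) auto

lemma frac_sum_frac: "frac (\<Sum>i\<in>I. frac (f i)) = frac (\<Sum>i\<in>I. f i)"
proof -
  have eq: "(\<Sum>i\<in>I. f i) = (\<Sum>i\<in>I. frac (f i)) + of_int (\<Sum>i\<in>I. \<lfloor>f i\<rfloor>)"
    by (simp add: frac_def sum_subtractf)
  show ?thesis unfolding eq by (rule frac_add_of_int_right[symmetric])
qed

section \<open>Points on a line through a rational point\<close>

text \<open>The paper's \<open>\<alpha> = \<beta> r + s\<close> after clearing denominators: \<open>\<theta> = \<beta> / Q\<close>, \<open>a = Q r\<close>, \<open>b = Q s\<close>.\<close>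

locale rational_line =
  fixes \<alpha> a b :: "real^'d" and \<theta> :: real and Q A :: nat
  assumes Q_pos: "0 < Q" and a_Ints: "\<And>i. a$i \<in> \<int>" and b_Ints: "\<And>i. b$i \<in> \<int>"
    and alpha_eq: "\<And>i. \<alpha>$i = \<theta> * a$i + b$i / Q" and a_bounded: "\<And>i. \<bar>a$i\<bar> \<le> A"
begin

lemma inner_alpha: "m \<bullet> \<alpha> = \<theta> * (m \<bullet> a) + (m \<bullet> b) / Q"
  by (simp add: inner_vec_def alpha_eq sum_distrib_left sum_divide_distrib sum.distrib algebra_simps)

lemma inner_a_eq_0:
  assumes "\<theta> \<notin> \<rat>" and u: "\<And>i. u$i \<in> \<int>" and "u \<bullet> \<alpha> \<in> \<int>"
  shows "u \<bullet> a = 0"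
proof (rule ccontr)
  assume "u \<bullet> a \<noteq> 0"
  then have "\<theta> = (u \<bullet> \<alpha> - (u \<bullet> b) / Q) / (u \<bullet> a)" by (simp add: inner_alpha field_simps)
  also have "\<dots> \<in> \<rat>"
    using assms(3) Ints_inner[OF u a_Ints] Ints_inner[OF u b_Ints] Ints_subset_Rats
    by (intro Rats_divide Rats_diff) auto
  finally show False using assms(1) by simp
qed

lemma inner_alpha_exchange_Ints:
  fixes t :: real
  assumes "t \<in> \<int>"
  shows "(axis j (t * Q * a$i) + axis i (- t * Q * a$j)) \<bullet> \<alpha> \<in> \<int>"
proof -
  have "(axis j (t * Q * a$i) + axis i (- t * Q * a$j)) \<bullet> \<alpha> = t * (a$i * b$j - a$j * b$i)"
    using Q_pos by (simp add: inner_add_left inner_axis' alpha_eq field_simps)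
  then show ?thesis using assms a_Ints b_Ints by simp
qed

text \<open>
  A lattice point is a boundary point when no coordinate \<open>j\<close> can serve in \<open>lattice_box_escape\<close>:
  \<open>a\<^sub>j = 0\<close>, the box is short in direction \<open>j\<close>, or \<open>m\<^sub>j\<close> is within \<open>Q A\<close> of a face.
\<close>

definition boundary_layer :: "real^'d \<Rightarrow> 'd \<Rightarrow> real set" where
  "boundary_layer T j = {t \<in> \<int>. 0 \<le> t \<and> t < T$j \<and>
     (a$j \<noteq> 0 \<and> Q * (A + 1) < T$j \<longrightarrow> t < Q * A \<or> T$j - Q * A \<le> t)}"

definition boundary_points :: "real^'d \<Rightarrow> (real^'d) set" where
  "boundary_points T = {m. \<forall>j. m$j \<in> boundary_layer T j}"

lemma finite_boundary_layer: "finite (boundary_layer T j)"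
  by (rule finite_subset[OF _ finite_Ints_interval[of 0 "T$j"]]) (auto simp: boundary_layer_def)

lemma card_frac_Ints_image_le:
  assumes "a$j = 0" "S \<subseteq> \<int>"
  shows "card ((\<lambda>t. frac (t * \<alpha>$j)) ` S) \<le> Q"
proof -
  have "(\<lambda>t. frac (t * \<alpha>$j)) ` S \<subseteq> (\<lambda>i. of_int i / real Q) ` {0..<int Q}"
  proof
    fix y assume "y \<in> (\<lambda>t. frac (t * \<alpha>$j)) ` S"
    then obtain t where "t \<in> \<int>" "y = frac (t * b$j / real Q)" using assms by (auto simp: alpha_eq)
    then show "y \<in> (\<lambda>i. of_int i / real Q) ` {0..<int Q}"
      using frac_Ints_divide[OF _ Q_pos] b_Ints by simp
  qed
  then have "card ((\<lambda>t. frac (t * \<alpha>$j)) ` S) \<le> card ((\<lambda>i. of_int i / real Q) ` {0..<int Q})"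
    by (rule card_mono[rotated]) simp
  also have "\<dots> \<le> card {0..<int Q}" by (rule card_image_le) simp
  finally show ?thesis by simp
qed

lemma card_frac_boundary_layer_le:
  "card ((\<lambda>t. frac (t * \<alpha>$j)) ` boundary_layer T j) \<le> Q * (2 * A + 1)"
proof -
  have card_image: "card ((\<lambda>t. frac (t * \<alpha>$j)) ` boundary_layer T j) \<le> card (boundary_layer T j)"
    by (rule card_image_le[OF finite_boundary_layer])
  have "real Q * real A = real (Q * A)" "real Q * (real A + 1) = real (Q * (A + 1))"
    by (simp_all add: algebra_simps)
  then have QA: "nat \<lceil>real Q * real A\<rceil> = Q * A" "nat \<lceil>real Q * (real A + 1)\<rceil> = Q * (A + 1)"
    by (simp_all only: ceiling_of_nat nat_int)
  consider "a$j = 0" | "a$j \<noteq> 0" "Q * (A + 1) < T$j" | "T$j \<le> Q * (A + 1)" by linarith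
  then show ?thesis
  proof cases
    case 1
    then show ?thesis
      using card_frac_Ints_image_le[of j "boundary_layer T j"] by (fastforce simp: boundary_layer_def)
  next
    case 2
    let ?W = "real Q * real A"
    let ?L = "{t \<in> \<int>. 0 \<le> t \<and> t < 0 + ?W}" and ?R = "{t \<in> \<int>. T$j - ?W \<le> t \<and> t < (T$j - ?W) + ?W}"
    have "boundary_layer T j \<subseteq> ?L \<union> ?R" using 2 by (auto simp: boundary_layer_def)
    then have "card (boundary_layer T j) \<le> card (?L \<union> ?R)"
      by (rule card_mono[rotated]) (simp add: finite_Ints_interval)
    also have "\<dots> \<le> card ?L + card ?R" by (rule card_Un_le)
    also have "\<dots> \<le> Q * A + Q * A"
      using card_Ints_interval_le[of 0 ?W] card_Ints_interval_le[of "T$j - ?W" ?W] QA(1) by linarith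
    finally show ?thesis using card_image by simp
  next
    case 3
    then have "boundary_layer T j \<subseteq> {t \<in> \<int>. 0 \<le> t \<and> t < 0 + real Q * (real A + 1)}"
      by (auto simp: boundary_layer_def algebra_simps)
    then have "card (boundary_layer T j) \<le> card {t \<in> \<int>. 0 \<le> t \<and> t < 0 + real Q * (real A + 1)}"
      by (rule card_mono[rotated]) (rule finite_Ints_interval)
    also have "\<dots> \<le> Q * (A + 1)" using card_Ints_interval_le QA(2) by metis
    finally show ?thesis using card_image by simp
  qed
qed

lemma card_frac_boundary_points_le:
  "card ((\<lambda>m. frac (m \<bullet> \<alpha>)) ` boundary_points T) \<le> (Q * (2 * A + 1)) ^ CARD('d)"
proof -
  define V where "V j = (\<lambda>t. frac (t * \<alpha>$j)) ` boundary_layer T j" for j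
  have finite_V: "finite (Pi\<^sub>E UNIV V)" unfolding V_def by (simp add: finite_PiE finite_boundary_layer)
  have "(\<lambda>m. frac (m \<bullet> \<alpha>)) ` boundary_points T \<subseteq> (\<lambda>f. frac (\<Sum>j\<in>UNIV. f j)) ` Pi\<^sub>E UNIV V"
  proof
    fix y assume "y \<in> (\<lambda>m. frac (m \<bullet> \<alpha>)) ` boundary_points T"
    then obtain m where m: "m \<in> boundary_points T" "y = frac (m \<bullet> \<alpha>)" by blast
    have "(\<lambda>j. frac (m$j * \<alpha>$j)) \<in> Pi\<^sub>E UNIV V" using m(1) by (auto simp: V_def boundary_points_def PiE_UNIV_domain)
    moreover have "y = frac (\<Sum>j\<in>UNIV. frac (m$j * \<alpha>$j))" unfolding m(2) frac_sum_frac inner_vec_def by simp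
    ultimately show "y \<in> (\<lambda>f. frac (\<Sum>j\<in>UNIV. f j)) ` Pi\<^sub>E UNIV V" by blast
  qed
  then have "card ((\<lambda>m. frac (m \<bullet> \<alpha>)) ` boundary_points T) \<le> card (Pi\<^sub>E UNIV V)"
    using finite_V by (meson card_image_le card_mono finite_imageI order_trans)
  also have "\<dots> = (\<Prod>j\<in>UNIV. card (V j))" by (simp add: card_PiE)
  also have "\<dots> \<le> (\<Prod>j\<in>(UNIV :: 'd set). Q * (2 * A + 1))"
    by (rule prod_mono) (use card_frac_boundary_layer_le in \<open>simp add: V_def\<close>)
  finally show ?thesis by simp
qed

lemma lattice_box_escape:
  fixes c :: real
  assumes c: "c \<in> {-1, 1}" and i: "a$i \<noteq> 0" "Q * (A + 1) < T$i"
    and m: "m \<in> lattice_box T" "m \<notin> boundary_points T"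
  obtains m' where "m' \<in> lattice_box T" "m' + axis i (c * Q) \<in> lattice_box T" "m' \<bullet> \<alpha> - m \<bullet> \<alpha> \<in> \<int>"
proof (cases "m + axis i (c * Q) \<in> lattice_box T")
  case True
  then show ?thesis using that m(1) by simp
next
  case False
  have c_Ints: "c \<in> \<int>" "c * Q \<in> \<int>" using c by auto
  have m_Ints: "m$k \<in> \<int>" "0 \<le> m$k" "m$k < T$k" for k using m(1) by (auto simp: lattice_box_def)
  obtain j where j: "a$j \<noteq> 0" "Q * (A + 1) < T$j" "Q * A \<le> m$j" "m$j < T$j - Q * A"
    using m m_Ints by (auto simp: boundary_points_def boundary_layer_def)
  have i_stuck: "\<not> (0 \<le> m$i + c * Q \<and> m$i + c * Q < T$i)"
    using False c_Ints(2) by (simp add: lattice_box_add_axis_iff[OF m(1)])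
  \<comment> \<open>move along \<open>t Q (a\<^sub>i e\<^sub>j - a\<^sub>j e\<^sub>i)\<close>, the sign \<open>t\<close> taking \<open>m\<^sub>i\<close> away from the blocking face\<close>
  define t where "t = c * sgn (a$j)"
  define d where "d = Q * \<bar>a$j\<bar>"
  define e where "e = t * Q * a$i"
  have t: "t \<in> \<int>" "\<bar>t\<bar> = 1" "- c * d = - t * Q * a$j"
    using c j(1) by (auto simp: t_def d_def sgn_real_def abs_mult)
  have "1 \<le> \<bar>a$j\<bar>" using Ints_nonzero_abs_ge1[OF a_Ints j(1)] .
  then have d: "Q \<le> d" "d \<le> Q * A" "d \<in> \<int>"
    using a_bounded[of j] a_Ints[of j] Q_pos by (auto simp: d_def mult_left_mono)
  have "\<bar>e\<bar> = Q * \<bar>a$i\<bar>" using t(2) by (simp add: e_def abs_mult)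
  then have e: "\<bar>e\<bar> \<le> Q * A" "e \<in> \<int>"
    using a_bounded[of i] a_Ints[of i] t(1) unfolding e_def by (auto simp: mult_left_mono)
  have "i \<noteq> j" using i_stuck j c d by auto
  define m' where "m' = m + axis j e + axis i (- c * d)"
  have m1: "m + axis j e \<in> lattice_box T"
    using lattice_box_add_axis_iff[OF m(1)] j e by (auto simp: abs_le_iff)
  have m1_i: "(m + axis j e)$i = m$i" using \<open>i \<noteq> j\<close> by (simp add: axis_def)
  from c consider "c = -1" | "c = 1" by blast
  then have "0 \<le> m$i - c * d \<and> m$i - c * d < T$i \<and> 0 \<le> m$i + (c * Q - c * d) \<and> m$i + (c * Q - c * d) < T$i"
    using i_stuck d m_Ints[of i] i(2) by cases (auto simp: algebra_simps)
  moreover have "- c * d \<in> \<int>" "c * Q - c * d \<in> \<int>" using c_Ints d by auto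
  ultimately have "m' \<in> lattice_box T" "m + axis j e + axis i (c * Q - c * d) \<in> lattice_box T"
    unfolding m'_def lattice_box_add_axis_iff[OF m1] m1_i by simp_all
  moreover have "m' + axis i (c * Q) = m + axis j e + axis i (c * Q - c * d)"
    by (simp add: m'_def axis_def vec_eq_iff)
  moreover have "m' \<bullet> \<alpha> - m \<bullet> \<alpha> \<in> \<int>"
    using inner_alpha_exchange_Ints[OF t(1), of j i] unfolding m'_def e_def t(3)
    by (simp add: inner_add_left)
  ultimately show ?thesis using that by simp
qed

lemma shift_defects_subset_boundary:
  fixes c :: real
  assumes c: "c \<in> {-1, 1}" and i: "a$i \<noteq> 0" "Q * (A + 1) < T$i"
    and X: "X = (\<lambda>m. frac (m \<bullet> \<alpha>)) ` lattice_box T"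
  shows "shift_defects X (c * (Q * \<alpha>$i)) \<subseteq> (\<lambda>m. frac (m \<bullet> \<alpha>)) ` boundary_points T"
proof
  have X_unit: "X \<subseteq> {0..<1}" unfolding X by (rule frac_image_subset)
  fix x assume "x \<in> shift_defects X (c * (Q * \<alpha>$i))"
  then obtain m where m: "m \<in> lattice_box T" "x = frac (m \<bullet> \<alpha>)"
    and defect: "x + c * (Q * \<alpha>$i) \<notin> int_translates X"
    unfolding shift_defects_def X by blast
  show "x \<in> (\<lambda>m. frac (m \<bullet> \<alpha>)) ` boundary_points T"
  proof (cases "m \<in> boundary_points T")
    case True
    then show ?thesis using m(2) by blast
  next
    case False
    obtain m' where m': "m' + axis i (c * Q) \<in> lattice_box T" "m' \<bullet> \<alpha> - m \<bullet> \<alpha> \<in> \<int>"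
      using lattice_box_escape[OF c i m(1) False] by blast
    have "frac (x + c * (Q * \<alpha>$i)) = frac ((m' + axis i (c * Q)) \<bullet> \<alpha> - (m' \<bullet> \<alpha> - m \<bullet> \<alpha>))"
      unfolding m(2) by (simp add: inner_axis' algebra_simps)
    also have "\<dots> = frac ((m' + axis i (c * Q)) \<bullet> \<alpha>)"
      using m'(2) by (metis Ints_minus diff_conv_add_uminus frac_add_int_right)
    finally have "frac (x + c * (Q * \<alpha>$i)) \<in> X" unfolding X using m'(1) by simp
    then show ?thesis using defect by (simp add: mem_int_translates_iff[OF X_unit])
  qed
qed

definition lattice_height :: "real^'d \<Rightarrow> real \<Rightarrow> real" where
  "lattice_height T x = inv_into (lattice_box T) (\<lambda>m. frac (m \<bullet> \<alpha>)) x \<bullet> a"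

lemma lattice_height_descent:
  assumes "\<theta> \<notin> \<rat>" and i: "a$i \<noteq> 0" and X: "X = (\<lambda>m. frac (m \<bullet> \<alpha>)) ` lattice_box T"
    and x: "x \<in> X" "x - Q * \<alpha>$i \<in> int_translates X"
  shows "sgn (a$i) * lattice_height T (frac (x - Q * \<alpha>$i)) < sgn (a$i) * lattice_height T x"
proof -
  define x' where "x' = frac (x - Q * \<alpha>$i)"
  have X_unit: "X \<subseteq> {0..<1}" unfolding X by (rule frac_image_subset)
  then have "x' \<in> X" using x(2) by (simp add: x'_def mem_int_translates_iff)
  define m\<^sub>0 m\<^sub>1 where "m\<^sub>0 = inv_into (lattice_box T) (\<lambda>m. frac (m \<bullet> \<alpha>)) x"
    and "m\<^sub>1 = inv_into (lattice_box T) (\<lambda>m. frac (m \<bullet> \<alpha>)) x'"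
  have m\<^sub>0: "m\<^sub>0 \<in> lattice_box T" "frac (m\<^sub>0 \<bullet> \<alpha>) = x"
    using x(1) unfolding X m\<^sub>0_def by (auto intro: inv_into_into f_inv_into_f)
  have m\<^sub>1: "m\<^sub>1 \<in> lattice_box T" "frac (m\<^sub>1 \<bullet> \<alpha>) = x'"
    using \<open>x' \<in> X\<close> unfolding X m\<^sub>1_def by (auto intro: inv_into_into f_inv_into_f)
  define u where "u = m\<^sub>0 - axis i (real Q) - m\<^sub>1"
  have "u$k \<in> \<int>" for k using m\<^sub>0(1) m\<^sub>1(1) by (auto simp: u_def axis_def lattice_box_def)
  moreover have "u \<bullet> \<alpha> = \<lfloor>m\<^sub>0 \<bullet> \<alpha>\<rfloor> + \<lfloor>x - Q * \<alpha>$i\<rfloor> - \<lfloor>m\<^sub>1 \<bullet> \<alpha>\<rfloor>"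
    using m\<^sub>0(2) m\<^sub>1(2) unfolding u_def x'_def frac_def by (simp add: inner_diff_left inner_axis')
  ultimately have "u \<bullet> a = 0" using inner_a_eq_0[OF assms(1)] by simp
  then have "m\<^sub>1 \<bullet> a = m\<^sub>0 \<bullet> a - Q * a$i" by (simp add: u_def inner_diff_left inner_axis')
  then have "sgn (a$i) * (m\<^sub>1 \<bullet> a) = sgn (a$i) * (m\<^sub>0 \<bullet> a) - Q * \<bar>a$i\<bar>"
    by (simp add: right_diff_distrib abs_sgn mult.left_commute)
  moreover have "0 < Q * \<bar>a$i\<bar>" using Q_pos i by simp
  ultimately show ?thesis by (simp add: lattice_height_def m\<^sub>0_def m\<^sub>1_def x'_def)
qed

lemma G_num_le_irrational:
  assumes irrational: "\<theta> \<notin> \<rat>" and T: "\<forall>i. 0 < T$i"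
  shows "G_num \<alpha> (scale_set T unit_cube) \<le> 3 * (Q * (2 * A + 1)) ^ CARD('d)"
proof -
  define X where "X = (\<lambda>m. frac (m \<bullet> \<alpha>)) ` lattice_box T"
  define B where "B = (\<lambda>m. frac (m \<bullet> \<alpha>)) ` boundary_points T"
  let ?N = "(Q * (2 * A + 1)) ^ CARD('d)"
  have finite_X: "finite X" and X_unit: "X \<subseteq> {0..<1}"
    unfolding X_def by (simp_all add: finite_lattice_box frac_image_subset)
  have "finite (boundary_points T)"
    unfolding boundary_points_def by (intro finite_vectors_with_components finite_boundary_layer)
  then have finite_B: "finite B" unfolding B_def by simp
  have card_B: "card B \<le> ?N" unfolding B_def by (rule card_frac_boundary_points_le)
  have "card (next_gap X ` X) \<le> 3 * ?N"
  proof (cases "\<exists>i. a$i \<noteq> 0 \<and> Q * (A + 1) < T$i")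
    case True
    then obtain i where i: "a$i \<noteq> 0" "Q * (A + 1) < T$i" by blast
    let ?\<tau> = "Q * \<alpha>$i"
    have "card (next_gap X ` X) \<le> 2 * card (shift_defects X (- ?\<tau>)) + card (shift_defects X ?\<tau>)"
      using card_next_gaps_le_shift_defects[OF finite_X X_unit, where \<mu> = "\<lambda>x. sgn (a$i) * lattice_height T x"]
        lattice_height_descent[OF irrational i(1) X_def] by blast
    also have "\<dots> \<le> 2 * card B + card B"
      using shift_defects_subset_boundary[OF _ i X_def, of "-1"] shift_defects_subset_boundary[OF _ i X_def, of 1]
      by (intro add_mono mult_left_mono card_mono finite_B) (simp_all add: B_def)
    finally show ?thesis using card_B by simp
  next
    case False
    then have "lattice_box T \<subseteq> boundary_points T"
      by (auto simp: lattice_box_def boundary_points_def boundary_layer_def)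
    then have "card X \<le> card B" using finite_B unfolding X_def B_def by (intro card_mono image_mono)
    then show ?thesis using card_image_le[OF finite_X, of "next_gap X"] card_B by simp
  qed
  then show ?thesis
    using T by (simp add: G_num_def S_set_scaled_unit_cube circle_gaps_eq_image X_def)
qed

end

lemma Rats_common_denominator:
  fixes v :: "real^'d"
  assumes "\<forall>i. v$i \<in> \<rat>"
  obtains L :: nat where "0 < L" "\<And>i. real L * v$i \<in> \<int>"
proof -
  have "\<forall>i. \<exists>q::nat. 0 < q \<and> real q * v$i \<in> \<int>"
  proof
    fix i
    obtain p q where "0 < q" "v$i = of_int p / of_int q" using assms Rats_cases' by meson
    then show "\<exists>q::nat. 0 < q \<and> real q * v$i \<in> \<int>" by (intro exI[of _ "nat q"]) auto
  qed
  then obtain d where d: "\<And>i. 0 < d i" "\<And>i. real (d i) * v$i \<in> \<int>" by metis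
  have "real (prod d UNIV) * v$i \<in> \<int>" for i
  proof -
    have "real (prod d UNIV) * v$i = real (prod d (UNIV - {i})) * (real (d i) * v$i)"
      by (simp add: prod.remove[of UNIV i])
    also have "\<dots> \<in> \<int>" by (rule Ints_mult[OF Ints_of_nat d(2)])
    finally show ?thesis .
  qed
  moreover have "0 < prod d UNIV" using d(1) by (simp add: prod_pos)
  ultimately show ?thesis using that by blast
qed

lemma G_num_bounded_rational:
  fixes \<alpha> :: "real^'d"
  assumes "\<forall>i. \<alpha>$i \<in> \<rat>"
  shows "\<exists>B. \<forall>T. (\<forall>i. 0 < T$i) \<longrightarrow> G_num \<alpha> (scale_set T unit_cube) \<le> B"
proof -
  obtain L where L: "0 < L" "\<And>i. real L * \<alpha>$i \<in> \<int>" using Rats_common_denominator[OF assms] by blast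
  have "G_num \<alpha> (scale_set T unit_cube) \<le> L" if T: "\<forall>i. 0 < T$i" for T :: "real^'d"
  proof -
    define X where "X = (\<lambda>m. frac (m \<bullet> \<alpha>)) ` lattice_box T"
    have X: "finite X" "X \<subseteq> {0..<1}" unfolding X_def by (simp_all add: finite_lattice_box frac_image_subset)
    have "real L * x \<in> \<int>" if "x \<in> X" for x
    proof -
      obtain m where m: "m \<in> lattice_box T" "x = frac (m \<bullet> \<alpha>)" using \<open>x \<in> X\<close> X_def by blast
      have "real L * (m \<bullet> \<alpha>) = m \<bullet> (real L *\<^sub>R \<alpha>)" by simp
      also have "\<dots> \<in> \<int>" using m(1) L(2) by (intro Ints_inner) (auto simp: lattice_box_def)
      finally show ?thesis unfolding m(2) frac_def by (simp add: right_diff_distrib)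
    qed
    then have "card (next_gap X ` X) \<le> L" by (rule card_next_gaps_le_denominator[OF X L(1)])
    then show ?thesis using T by (simp add: G_num_def S_set_scaled_unit_cube circle_gaps_eq_image X_def)
  qed
  then show ?thesis by blast
qed

lemma rational_line_of_Rats:
  fixes \<alpha> r s :: "real^'d"
  assumes "\<forall>i. r$i \<in> \<rat>" "\<forall>i. s$i \<in> \<rat>" "\<alpha> = \<beta> *\<^sub>R r + s"
  obtains a b Q A where "rational_line \<alpha> a b (\<beta> / Q) Q A"
proof -
  obtain Q\<^sub>r Q\<^sub>s :: nat where Q: "0 < Q\<^sub>r" "\<And>i. real Q\<^sub>r * r$i \<in> \<int>" "0 < Q\<^sub>s" "\<And>i. real Q\<^sub>s * s$i \<in> \<int>"
    using Rats_common_denominator[OF assms(1)] Rats_common_denominator[OF assms(2)] by metis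
  define Q where "Q = Q\<^sub>r * Q\<^sub>s"
  define a where "a = real Q *\<^sub>R r"
  define b where "b = real Q *\<^sub>R s"
  have "a$i = real Q\<^sub>s * (real Q\<^sub>r * r$i)" "b$i = real Q\<^sub>r * (real Q\<^sub>s * s$i)" for i
    by (simp_all add: a_def b_def Q_def)
  then have Ints: "a$i \<in> \<int>" "b$i \<in> \<int>" for i using Q by simp_all
  define A where "A = nat \<lceil>\<Sum>i\<in>UNIV. \<bar>a$i\<bar>\<rceil>"
  have "\<bar>a$i\<bar> \<le> A" for i
  proof -
    have "\<bar>a$i\<bar> \<le> (\<Sum>i\<in>UNIV. \<bar>a$i\<bar>)" by (rule member_le_sum) simp_all
    then show ?thesis unfolding A_def using real_nat_ceiling_ge order_trans by blast
  qed
  moreover have "0 < Q" using Q by (simp add: Q_def)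
  ultimately have "rational_line \<alpha> a b (\<beta> / Q) Q A"
    using Ints by unfold_locales (simp_all add: assms(3) a_def b_def)
  then show ?thesis using that by blast
qed

theorem theorem1p4:
  fixes \<alpha> r s :: "real ^ 'd" and \<beta> :: real
  assumes "\<forall>i. r $ i \<in> \<rat>" and "\<forall>i. s $ i \<in> \<rat>"
    and "\<alpha> = \<beta> *\<^sub>R r + s"
  shows "\<exists>B::nat. \<forall>T :: real ^ 'd. (\<forall>i. 1 \<le> T $ i) \<longrightarrow> G_num \<alpha> (scale_set T unit_cube) \<le> B"
proof -
  have "\<exists>B. \<forall>T :: real ^ 'd. (\<forall>i. 0 < T $ i) \<longrightarrow> G_num \<alpha> (scale_set T unit_cube) \<le> B"
  proof (cases "\<beta> \<in> \<rat>")
    case True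
    then show ?thesis using assms by (intro G_num_bounded_rational) simp
  next
    case False
    obtain a b Q A where line: "rational_line \<alpha> a b (\<beta> / Q) Q A"
      using rational_line_of_Rats[OF assms] .
    have "\<beta> / Q \<notin> \<rat>"
      using False rational_line.Q_pos[OF line] Rats_mult[OF _ Rats_of_nat[of Q]] by force
    then show ?thesis using rational_line.G_num_le_irrational[OF line] by blast
  qed
  then show ?thesis by (meson less_le_trans zero_less_one)
qed

end
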